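(* For every $n\ge1$, the number of non-squashing stacks whose largest box has label exactly $n$ equals $b(2n)$; that is, $f(n)-f(n-1)=b(2n)$. Equivalently, there is a bijection between sets $\{p_1<\cdots<p_k=n\}$ of positive integers with $p_1+\cdots+p_j\le p_{j+1}$ for $1\le j\le k-1$ and non-squashing partitions of $2n$ into distinct parts.
   Context: A partition $n=p_1+\cdots+p_k$ with $1\le p_1\le\cdots\le p_k$ is non-squashing if $p_1+\cdots+p_j\le p_{j+1}$ for all $1\le j\le k-1$; $b(n)$ is the number of non-squashing partitions of $n$ into distinct parts ($b(0)=1$). A non-squashing stack with labels at most $n$ is a (possibly empty) set of distinct integers $1\le p_1<p_2<\cdots<p_k\le n$ satisfying $p_1+\cdots+p_j\le p_{j+1}$ for $1\le j\le k-1$. $f(n)$ denotes the number of such stacks (so $f(0)=1$, counting the empty stack). *)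

theory Defs
  imports Main
begin

definition nonsquashing :: "nat list \<Rightarrow> bool" where
  "nonsquashing xs \<longleftrightarrow> (\<forall>j. 0 < j \<and> j < length xs \<longrightarrow> sum_list (take j xs) \<le> xs ! j)"

definition ns_stacks :: "nat \<Rightarrow> nat list set" where
  "ns_stacks n = {xs. sorted_wrt (<) xs \<and> set xs \<subseteq> {1..n} \<and> nonsquashing xs}"

definition f :: "nat \<Rightarrow> nat" where
  "f n = card (ns_stacks n)"

definition ns_distinct_partitions :: "nat \<Rightarrow> nat list set" where
  "ns_distinct_partitions n =
     {xs. sorted_wrt (<) xs \<and> 0 \<notin> set xs \<and> sum_list xs = n \<and> nonsquashing xs}"

definition b :: "nat \<Rightarrow> nat" where
  "b n = card (ns_distinct_partitions n)"

end

theory Submission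
  imports Defs
begin

text \<open>A stack with top box n is ys @ [n], where ys is a stack with labels below n
  and total at most n.  Replacing the top n by 2n - sum ys gives a non-squashing partition
  of 2n into distinct parts with the same base ys, and every such partition arises this way
  exactly once.  The second claim follows because a stack with labels at most n either avoids n
  or has n on top.\<close>

lemma nonsquashing_snoc:
  "nonsquashing (ys @ [x]) \<longleftrightarrow> nonsquashing ys \<and> (ys \<noteq> [] \<longrightarrow> sum_list ys \<le> x)"
proof
  assume ns: "nonsquashing (ys @ [x])"
  have "sum_list (take j ys) \<le> ys ! j" if "0 < j" "j < length ys" for j
    using ns that unfolding nonsquashing_def by (force simp: nth_append)
  moreover have "sum_list ys \<le> x" if "ys \<noteq> []"
    using ns that unfolding nonsquashing_def
    by (metis append_eq_conv_conj length_append_singleton length_greater_0_conv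
        lessI nth_append_length)
  ultimately show "nonsquashing ys \<and> (ys \<noteq> [] \<longrightarrow> sum_list ys \<le> x)"
    unfolding nonsquashing_def by blast
next
  assume "nonsquashing ys \<and> (ys \<noteq> [] \<longrightarrow> sum_list ys \<le> x)"
  then show "nonsquashing (ys @ [x])"
    unfolding nonsquashing_def
    by (auto simp: nth_append less_Suc_eq)
qed

lemma finite_ns_stacks: "finite (ns_stacks n)"
proof (rule finite_subset)
  show "ns_stacks n \<subseteq> {xs. set xs \<subseteq> {1..n} \<and> length xs \<le> n}"
  proof safe
    fix xs assume xs: "xs \<in> ns_stacks n"
    then have "distinct xs" and labels: "set xs \<subseteq> {1..n}"
      unfolding ns_stacks_def by (auto simp: strict_sorted_iff)
    then have "length xs = card (set xs)" by (simp add: distinct_card)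
    also have "\<dots> \<le> n" using card_mono[OF _ labels] by simp
    finally show "length xs \<le> n" .
  qed (auto simp: ns_stacks_def)
  show "finite {xs. set xs \<subseteq> {1..n} \<and> length xs \<le> n}"
    by (rule finite_lists_length_le) simp
qed

definition ns_stacks_under :: "nat \<Rightarrow> nat list set" where
  "ns_stacks_under n = {ys \<in> ns_stacks (n - 1). sum_list ys \<le> n}"

lemma snoc_in_ns_stacks_iff:
  assumes "0 < n"
  shows "ys @ [n] \<in> ns_stacks n \<longleftrightarrow> ys \<in> ns_stacks_under n"
  using assms
  by (fastforce simp: ns_stacks_under_def ns_stacks_def sorted_wrt_append nonsquashing_snoc)

lemma snoc_in_ns_distinct_partitions_iff:
  assumes "0 < n"
  shows "ys @ [q] \<in> ns_distinct_partitions (2 * n)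
         \<longleftrightarrow> ys \<in> ns_stacks_under n \<and> q = 2 * n - sum_list ys"
proof
  assume "ys @ [q] \<in> ns_distinct_partitions (2 * n)"
  then have sorted: "sorted_wrt (<) ys" and below_q: "\<forall>y\<in>set ys. y < q"
    and pos: "0 \<notin> set ys" and ns: "nonsquashing ys"
    and sum_le: "sum_list ys \<le> q" and sum_eq: "sum_list ys + q = 2 * n"
    unfolding ns_distinct_partitions_def
    by (auto simp: sorted_wrt_append nonsquashing_snoc)
  have "y \<in> {1..n - 1}" if "y \<in> set ys" for y
  proof -
    \<comment> \<open>y = n would force ys = [n] and q = n, contradicting y < q\<close>
    have "y \<le> sum_list ys" using that by (simp add: member_le_sum_list)
    then show ?thesis using that pos below_q sum_le sum_eq
      by (cases y) fastforce+
  qed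
  then show "ys \<in> ns_stacks_under n \<and> q = 2 * n - sum_list ys"
    using sorted ns sum_le sum_eq
    unfolding ns_stacks_under_def ns_stacks_def by auto
next
  assume "ys \<in> ns_stacks_under n \<and> q = 2 * n - sum_list ys"
  then show "ys @ [q] \<in> ns_distinct_partitions (2 * n)"
    using assms
    unfolding ns_stacks_under_def ns_stacks_def ns_distinct_partitions_def
    by (fastforce simp: sorted_wrt_append nonsquashing_snoc)
qed

lemma top_ns_stacks_eq_image:
  assumes "0 < n"
  shows "{xs \<in> ns_stacks n. xs \<noteq> [] \<and> last xs = n} = (\<lambda>ys. ys @ [n]) ` ns_stacks_under n"
proof (intro equalityI subsetI)
  fix xs assume "xs \<in> {xs \<in> ns_stacks n. xs \<noteq> [] \<and> last xs = n}"
  then have "butlast xs @ [n] \<in> ns_stacks n" and "xs = butlast xs @ [n]"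
    by (auto simp: append_butlast_last_id)
  then show "xs \<in> (\<lambda>ys. ys @ [n]) ` ns_stacks_under n"
    using snoc_in_ns_stacks_iff[OF assms] by blast
next
  fix xs assume "xs \<in> (\<lambda>ys. ys @ [n]) ` ns_stacks_under n"
  then show "xs \<in> {xs \<in> ns_stacks n. xs \<noteq> [] \<and> last xs = n}"
    using snoc_in_ns_stacks_iff[OF assms] by auto
qed


lemma ns_distinct_partitions_double_eq_image:
  assumes "0 < n"
  shows "ns_distinct_partitions (2 * n)
         = (\<lambda>ys. ys @ [2 * n - sum_list ys]) ` ns_stacks_under n"
proof (intro equalityI subsetI)
  fix xs assume xs: "xs \<in> ns_distinct_partitions (2 * n)"
  then have "xs \<noteq> []" using assms by (auto simp: ns_distinct_partitions_def)
  then have "xs = butlast xs @ [last xs]" by simp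
  with xs have "butlast xs \<in> ns_stacks_under n"
    and "xs = butlast xs @ [2 * n - sum_list (butlast xs)]"
    using snoc_in_ns_distinct_partitions_iff[OF assms, of "butlast xs" "last xs"] by auto
  then show "xs \<in> (\<lambda>ys. ys @ [2 * n - sum_list ys]) ` ns_stacks_under n" by blast
next
  fix xs assume "xs \<in> (\<lambda>ys. ys @ [2 * n - sum_list ys]) ` ns_stacks_under n"
  then show "xs \<in> ns_distinct_partitions (2 * n)"
    using snoc_in_ns_distinct_partitions_iff[OF assms] by auto
qed

lemma card_top_ns_stacks:
  assumes "0 < n"
  shows "card {xs \<in> ns_stacks n. xs \<noteq> [] \<and> last xs = n} = b (2 * n)"
proof -
  have inj_snoc: "inj_on (\<lambda>ys. ys @ [c ys]) A" for c :: "nat list \<Rightarrow> nat" and A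
    by (rule inj_onI) (metis butlast_snoc)
  have "card {xs \<in> ns_stacks n. xs \<noteq> [] \<and> last xs = n} = card (ns_stacks_under n)"
    unfolding top_ns_stacks_eq_image[OF assms] by (rule card_image[OF inj_snoc])
  also have "\<dots> = b (2 * n)"
    unfolding b_def ns_distinct_partitions_double_eq_image[OF assms]
    by (rule card_image[OF inj_snoc, symmetric])
  finally show ?thesis .
qed


lemma ns_stacks_split_top:
  assumes "0 < n"
  shows "ns_stacks n = ns_stacks (n - 1) \<union> {xs \<in> ns_stacks n. xs \<noteq> [] \<and> last xs = n}"
    and "ns_stacks (n - 1) \<inter> {xs \<in> ns_stacks n. xs \<noteq> [] \<and> last xs = n} = {}"
proof -
  have top: "xs \<noteq> [] \<and> last xs = n" if "xs \<in> ns_stacks n" "n \<in> set xs" for xs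
  proof -
    obtain ys x where "xs = ys @ [x]"
      using \<open>n \<in> set xs\<close> by (cases xs rule: rev_cases) auto
    then show ?thesis
      using that unfolding ns_stacks_def by (auto simp: sorted_wrt_append)
  qed
  have lower: "xs \<in> ns_stacks (n - 1)" if "xs \<in> ns_stacks n" "n \<notin> set xs" for xs
  proof -
    have "set xs \<subseteq> {1..n - 1}"
    proof
      fix y assume "y \<in> set xs"
      then have "y \<in> {1..n}" "y \<noteq> n" using that unfolding ns_stacks_def by auto
      then show "y \<in> {1..n - 1}" by auto
    qed
    then show ?thesis using that(1) unfolding ns_stacks_def by blast
  qed
  have "{1..n - 1} \<subseteq> {1..n}" by auto
  then have "ns_stacks (n - 1) \<subseteq> ns_stacks n"
    unfolding ns_stacks_def by blast
  then show "ns_stacks n = ns_stacks (n - 1) \<union> {xs \<in> ns_stacks n. xs \<noteq> [] \<and> last xs = n}"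
    using top lower by blast
  show "ns_stacks (n - 1) \<inter> {xs \<in> ns_stacks n. xs \<noteq> [] \<and> last xs = n} = {}"
    using assms unfolding ns_stacks_def by (auto dest!: last_in_set)
qed


lemma f_eq_add_card_top:
  assumes "0 < n"
  shows "f n = f (n - 1) + card {xs \<in> ns_stacks n. xs \<noteq> [] \<and> last xs = n}"
proof -
  have "f n = card (ns_stacks (n - 1) \<union> {xs \<in> ns_stacks n. xs \<noteq> [] \<and> last xs = n})"
    unfolding f_def by (rule arg_cong[OF ns_stacks_split_top(1)[OF assms]])
  also have "\<dots> = f (n - 1) + card {xs \<in> ns_stacks n. xs \<noteq> [] \<and> last xs = n}"
    unfolding f_def
    by (rule card_Un_disjoint) (use finite_ns_stacks ns_stacks_split_top(2)[OF assms] in auto)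
  finally show ?thesis .
qed

theorem mainTheorem9:
  fixes n :: nat
  assumes "n \<ge> 1"
  shows "card {xs \<in> ns_stacks n. xs \<noteq> [] \<and> last xs = n} = b (2 * n)
         \<and> int (f n) - int (f (n - 1)) = int (b (2 * n))"
  using f_eq_add_card_top card_top_ns_stacks assms by simp

end
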